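(* Let $K$ be a non-zero real constant. Let $J\subset(0,\infty)$ be an open interval and $u:J\to\mathbb{R}$ a smooth function with $u'(\alpha)\neq0$ on $J$. The rotational surface in $(\mathbb{R}^3,\|\cdot\|)$ given by $\bar f(\alpha,v)=(\alpha\cos v,\ \alpha\sin v,\ u(\alpha))$ has constant Minkowski Gaussian curvature $K$ if and only if there are a constant $c_1$ and a fixed sign such that $0<K\alpha^2+c_1<1$ for all $\alpha\in J$ and $$u'(\alpha)=\pm\frac{(K\alpha^2+c_1)^{\frac{2m-1}{2}}}{\left\{1-(K\alpha^2+c_1)^m\right\}^{\frac{2m-1}{2m}}}\qquad(\alpha\in J),$$ i.e. $u(\alpha)=\pm\int\frac{(K\alpha^2+c_1)^{\frac{2m-1}{2}}}{\{1-(K\alpha^2+c_1)^m\}^{\frac{2m-1}{2m}}}\,d\alpha$.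
   Context: Fix an integer $m\ge 2$. Let $\Phi(x_1,x_2,x_3)=(x_1^2+x_2^2)^m+x_3^{2m}$ and let $\|\cdot\|$ be the norm on $\mathbb{R}^3$ whose unit sphere is $S=\{x\in\mathbb{R}^3:\Phi(x)=1\}$ (a smooth, strictly convex surface). For a surface given by a parametrization $f(s,v)$, its Birkhoff–Gauss map $\eta$ is the map into $S$ defined by requiring $\eta\in S$ and $\nabla\Phi(\eta)=\mu\, f_s\times f_v$ for some function $\mu>0$, where $\times$ is the standard cross product (so the tangent plane of $S$ at $\eta(p)$ is parallel to $T_pM$, and $d\eta_p$ is an endomorphism of $T_pM$). The Minkowski Gaussian curvature is $K=\det(d\eta_p)$ (it does not depend on the choice of orientation). *)

theory Defs
  imports "HOL-Analysis.Analysis"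
begin

definition smooth_real_on :: "real set \<Rightarrow> (real \<Rightarrow> real) \<Rightarrow> bool" where
  "smooth_real_on J u \<longleftrightarrow> (\<forall>n. \<forall>x\<in>J. ((deriv ^^ n) u) differentiable (at x))"

text \<open>The gauge function Phi whose level set Phi = 1 is the unit sphere of the norm.\<close>
definition Phi :: "nat \<Rightarrow> real^3 \<Rightarrow> real" where
  "Phi m x = ((x$1)^2 + (x$2)^2)^m + (x$3)^(2*m)"

definition d_s :: "(real \<times> real \<Rightarrow> real^3) \<Rightarrow> real \<times> real \<Rightarrow> real^3" where
  "d_s f p = frechet_derivative f (at p) (1, 0)"

definition d_v :: "(real \<times> real \<Rightarrow> real^3) \<Rightarrow> real \<times> real \<Rightarrow> real^3" where
  "d_v f p = frechet_derivative f (at p) (0, 1)"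

definition BG_map :: "nat \<Rightarrow> (real \<times> real \<Rightarrow> real^3) \<Rightarrow> real \<times> real \<Rightarrow> real^3" where
  "BG_map m f p = (THE y. Phi m y = 1 \<and>
      (\<exists>\<mu>>0. (Phi m has_derivative (\<lambda>h. (\<mu> *\<^sub>R cross3 (d_s f p) (d_v f p)) \<bullet> h)) (at y)))"

definition mink_gauss_curv_at :: "nat \<Rightarrow> (real \<times> real \<Rightarrow> real^3) \<Rightarrow> real \<times> real \<Rightarrow> real \<Rightarrow> bool" where
  "mink_gauss_curv_at m f p k \<longleftrightarrow>
     f differentiable (at p) \<and> BG_map m f differentiable (at p) \<and>
     (\<exists>a b c d. d_s (BG_map m f) p = a *\<^sub>R d_s f p + c *\<^sub>R d_v f p \<and>
                d_v (BG_map m f) p = b *\<^sub>R d_s f p + d *\<^sub>R d_v f p \<and>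
                k = a * d - b * c)"

definition const_mink_gauss_curv :: "nat \<Rightarrow> (real \<times> real \<Rightarrow> real^3) \<Rightarrow> (real \<times> real) set \<Rightarrow> real \<Rightarrow> bool" where
  "const_mink_gauss_curv m f U k \<longleftrightarrow> (\<forall>p\<in>U. mink_gauss_curv_at m f p k)"

definition rot_surface :: "(real \<Rightarrow> real) \<Rightarrow> real \<times> real \<Rightarrow> real^3" where
  "rot_surface u p = vector [fst p * cos (snd p), fst p * sin (snd p), u (fst p)]"

end

theory Submission
  imports Defs
begin

text \<open>
  The Birkhoff--Gauss map of the rotational surface is again rotational,
  \<eta>(\<alpha>, v) = (-\<epsilon> \<rho> cos v, -\<epsilon> \<rho> sin v, z) with \<epsilon> = sgn u'(\<alpha>), where (\<rho>, z) is the point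
  of the curve \<rho>^(2m) + z^(2m) = 1, \<rho>, z > 0, at which the normal of the unit sphere is
  parallel to that of the surface, i.e. \<rho>^(2m-1) = |u'| z^(2m-1); this point is unique because
  the unit sphere is strictly convex. In the frame f_\<alpha>, f_v the differential of \<eta> is diagonal
  with entries -\<epsilon> \<rho>' and -\<epsilon> \<rho> / \<alpha>, so the curvature is \<rho> \<rho>' / \<alpha> = (\<rho>^2)' / (2 \<alpha>).
  Hence it equals K iff \<rho>^2 = K \<alpha>^2 + c1, and solving the slope relation for u' gives
  the stated formula.
\<close>

lemma vec3_eq_iff: "(x::real^3) = y \<longleftrightarrow> x$1 = y$1 \<and> x$2 = y$2 \<and> x$3 = y$3"
  by (simp add: vec_eq_iff forall_3)

lemma has_derivative_vector3:
  assumes "(f1 has_derivative f1') F" "(f2 has_derivative f2') F" "(f3 has_derivative f3') F"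
  shows "((\<lambda>x. vector [f1 x, f2 x, f3 x] :: real^3) has_derivative (\<lambda>h. vector [f1' h, f2' h, f3' h])) F"
proof -
  have "\<And>a b c. (vector [a, b, c] :: real^3) = a *\<^sub>R axis 1 1 + b *\<^sub>R axis 2 1 + c *\<^sub>R axis 3 1"
    by (simp add: vec3_eq_iff axis_def)
  then show ?thesis
    by (simp only:) (intro has_derivative_add has_derivative_scaleR_left assms)
qed

lemma has_real_derivative_fst_comp:
  assumes "(f has_real_derivative f') (at a)"
  shows "((\<lambda>q. f (fst q)) has_derivative (\<lambda>h. f' * fst h)) (at (a, v))"
  using has_derivative_compose[OF has_derivative_fst[OF has_derivative_ident], of f "(*) f'" "(a, v)"] assms
  by (simp add: has_field_derivative_def)

lemma has_derivative_imp_partial_derivatives: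
  fixes F :: "real \<times> real \<Rightarrow> real^'n"
  assumes "(F has_derivative D) (at (a, b))"
  shows "((\<lambda>x. F (x, b) $ i) has_real_derivative D (1, 0) $ i) (at a)"
    and "((\<lambda>t. F (a, t) $ i) has_real_derivative D (0, 1) $ i) (at b)"
proof -
  have lin: "linear D"
    using assms by (rule has_derivative_linear)
  have D1: "(\<lambda>h. D (h, 0) $ i) = (*) (D (1, 0) $ i)"
  proof
    fix h
    show "D (h, 0) $ i = D (1, 0) $ i * h"
      using linear_cmul[OF lin, of h "(1, 0)"] by simp
  qed
  have D2: "(\<lambda>h. D (0, h) $ i) = (*) (D (0, 1) $ i)"
  proof
    fix h
    show "D (0, h) $ i = D (0, 1) $ i * h"
      using linear_cmul[OF lin, of h "(0, 1)"] by simp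
  qed
  have "((\<lambda>x. (x, b)) has_derivative (\<lambda>h. (h, 0))) (at a)"
    by (intro has_derivative_Pair has_derivative_ident has_derivative_const)
  from has_derivative_compose[OF this assms]
  have "((\<lambda>x. F (x, b)) has_derivative (\<lambda>h. D (h, 0))) (at a)" .
  from bounded_linear.has_derivative[OF bounded_linear_vec_nth this]
  show "((\<lambda>x. F (x, b) $ i) has_real_derivative D (1, 0) $ i) (at a)"
    unfolding has_field_derivative_def D1[symmetric] .
  have "((\<lambda>t. (a, t)) has_derivative (\<lambda>h. (0, h))) (at b)"
    by (intro has_derivative_Pair has_derivative_ident has_derivative_const)
  from has_derivative_compose[OF this assms]
  have "((\<lambda>t. F (a, t)) has_derivative (\<lambda>h. D (0, h))) (at b)" .
  from bounded_linear.has_derivative[OF bounded_linear_vec_nth this]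
  show "((\<lambda>t. F (a, t) $ i) has_real_derivative D (0, 1) $ i) (at b)"
    unfolding has_field_derivative_def D2[symmetric] .
qed

lemma sgn_constant_on_interval:
  fixes f :: "real \<Rightarrow> real"
  assumes "is_interval J" "continuous_on J f" "\<forall>x\<in>J. f x \<noteq> 0" "a \<in> J" "b \<in> J"
  shows "sgn (f a) = sgn (f b)"
proof -
  have conn: "connected (f ` J)"
    using assms(1,2) by (intro connected_continuous_image) (simp_all add: is_interval_connected)
  have "0 \<notin> f ` J"
    using assms(3) by auto
  then have "\<not> (f x < 0 \<and> 0 < f y)" if "x \<in> J" "y \<in> J" for x y
    using connectedD_interval[OF conn, of "f x" "f y" 0] that by force
  then show ?thesis
    using assms(3-5) by (metis linorder_neqE_linordered_idom sgn_neg sgn_pos)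
qed

lemma odd_power_eq_iff:
  fixes x y :: real
  assumes "odd k"
  shows "x ^ k = y ^ k \<longleftrightarrow> x = y"
  by (metis assms odd_real_root_power_cancel)

lemma smooth_real_on_has_real_derivative:
  assumes "smooth_real_on J u" "x \<in> J"
  shows "(u has_real_derivative deriv u x) (at x)"
  using assms unfolding smooth_real_on_def
  by (metis DERIV_deriv_iff_real_differentiable funpow_0)

lemma smooth_real_on_continuous_deriv:
  assumes "smooth_real_on J u"
  shows "continuous_on J (deriv u)"
proof (intro continuous_at_imp_continuous_on ballI)
  fix x
  assume "x \<in> J"
  then have "((deriv ^^ 1) u) differentiable (at x)"
    using assms unfolding smooth_real_on_def by blast
  then show "isCont (deriv u) x"
    by (simp add: differentiable_imp_continuous_within)
qed

definition gradPhi :: "nat \<Rightarrow> real^3 \<Rightarrow> real^3" where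
  "gradPhi m y = vector [2*m*((y$1)^2+(y$2)^2)^(m-1) * y$1, 2*m*((y$1)^2+(y$2)^2)^(m-1) * y$2, 2*m*(y$3)^(2*m-1)]"

lemma Phi_has_derivative: "(Phi m has_derivative (\<lambda>h. gradPhi m y \<bullet> h)) (at y)"
proof -
  have "(Phi m has_derivative (\<lambda>h. real m * ((y$1)^2+(y$2)^2)^(m-1) * (2*y$1*h$1 + 2*y$2*h$2)
        + real (2*m) * (y$3)^(2*m-1) * h$3)) (at y)"
    unfolding Phi_def
    by (auto intro!: derivative_eq_intros bounded_linear.has_derivative[OF bounded_linear_vec_nth]
        simp: algebra_simps)
  also have "(\<lambda>h. real m * ((y$1)^2+(y$2)^2)^(m-1) * (2*y$1*h$1 + 2*y$2*h$2)
        + real (2*m) * (y$3)^(2*m-1) * h$3) = (\<lambda>h. gradPhi m y \<bullet> h)"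
    by (auto simp: gradPhi_def inner_vec_def sum_3 algebra_simps)
  finally show ?thesis .
qed

lemma gradPhi_eqI:
  assumes "(Phi m has_derivative (\<lambda>h. g \<bullet> h)) (at y)"
  shows "gradPhi m y = g"
proof -
  have "(\<lambda>h. gradPhi m y \<bullet> h) = (\<lambda>h. g \<bullet> h)"
    using has_derivative_unique[OF Phi_has_derivative assms] .
  then have "gradPhi m y \<bullet> axis i 1 = g \<bullet> axis i 1" for i
    by metis
  then show ?thesis
    by (simp add: vec_eq_iff inner_axis)
qed

text \<open>Strict convexity of the unit sphere: writing c = t^(2n+1), the hypothesis gives
  y$3 = t y'$3 and (y$1)^2 + (y$2)^2 = t^2 ((y'$1)^2 + (y'$2)^2), so 1 = Phi y = t^(2n+2) Phi y'
  forces t = 1.\<close>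

lemma gradPhi_parallel_imp_eq:
  assumes sphere: "Phi (Suc n) y = 1" "Phi (Suc n) y' = 1"
    and "c > 0" and grad: "gradPhi (Suc n) y = c *\<^sub>R gradPhi (Suc n) y'"
  shows "y = y'"
proof -
  define R where "R = (y$1)^2 + (y$2)^2"
  define R' where "R' = (y'$1)^2 + (y'$2)^2"
  define t where "t = root (2*n+1) c"
  have t: "t > 0" "t^(2*n+1) = c"
    using \<open>c > 0\<close> real_root_pow_pos2[of "2*n+1" c] by (auto simp: t_def simp del: real_root_pow_pos2)
  have e1: "R^n * y$1 = c * (R'^n * y'$1)" and e2: "R^n * y$2 = c * (R'^n * y'$2)"
    and e3: "(y$3)^(2*n+1) = c * (y'$3)^(2*n+1)"
    using grad by (simp_all add: gradPhi_def vec3_eq_iff R_def R'_def)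
  have "(y$3)^(2*n+1) = (t * y'$3)^(2*n+1)"
    using e3 t by (simp add: power_mult_distrib)
  then have y3: "y$3 = t * y'$3"
    by (subst (asm) odd_power_eq_iff) simp_all
  have sq_sum: "r^(2*n+1) = (r^n * a)^2 + (r^n * b)^2" if "r = a^2 + b^2" for r a b :: real
    using that by (simp add: power_mult_distrib power_add power_mult algebra_simps flip: power_mult)
  have "R^(2*n+1) = c^2 * R'^(2*n+1)"
    unfolding sq_sum[OF R_def] sq_sum[OF R'_def] R_def[symmetric] R'_def[symmetric] e1 e2
    by (simp add: power_mult_distrib algebra_simps)
  also have "\<dots> = (t^2 * R')^(2*n+1)"
    using t(2) by (metis power_mult power_mult_distrib mult.commute)
  finally have R: "R = t^2 * R'"
    by (subst (asm) power_eq_iff_eq_base) (auto simp: R_def R'_def)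
  have "1 = R^(n+1) + (y$3)^(2*n+2)"
    using sphere(1) by (simp add: Phi_def R_def)
  also have "\<dots> = t^(2*n+2) * (R'^(n+1) + (y'$3)^(2*n+2))"
    using power_mult[of t 2 "n+1"] unfolding R y3 by (simp add: power_mult_distrib distrib_left)
  also have "R'^(n+1) + (y'$3)^(2*n+2) = 1"
    using sphere(2) by (simp add: Phi_def R'_def)
  finally have "t^(2*n+2) = 1"
    by simp
  then have "t = 1"
    using t(1) power_eq_iff_eq_base[of "2*n+2" t 1] by simp
  then have "R = R'" "y$3 = y'$3" "R^n * y$1 = R^n * y'$1" "R^n * y$2 = R^n * y'$2"
    using R y3 e1 e2 t(2) by simp_all
  moreover have "y$1 = y'$1 \<and> y$2 = y'$2"
  proof (cases "R = 0")
    case True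
    with \<open>R = R'\<close> show ?thesis
      by (simp add: R_def R'_def)
  next
    case False
    with calculation(3,4) show ?thesis
      by simp
  qed
  ultimately show ?thesis
    by (simp add: vec3_eq_iff)
qed

lemma BG_map_eqI:
  assumes "Phi (Suc n) y = 1" and "\<mu> > 0"
    and "gradPhi (Suc n) y = \<mu> *\<^sub>R cross3 (d_s f p) (d_v f p)"
  shows "BG_map (Suc n) f p = y"
  unfolding BG_map_def
proof (rule the_equality)
  show "Phi (Suc n) y = 1 \<and> (\<exists>\<mu>>0. (Phi (Suc n) has_derivative
          (\<lambda>h. (\<mu> *\<^sub>R cross3 (d_s f p) (d_v f p)) \<bullet> h)) (at y))"
    using assms(1,2) Phi_has_derivative[of "Suc n" y] unfolding assms(3) by blast
next
  fix y'
  assume "Phi (Suc n) y' = 1 \<and> (\<exists>\<nu>>0. (Phi (Suc n) has_derivative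
          (\<lambda>h. (\<nu> *\<^sub>R cross3 (d_s f p) (d_v f p)) \<bullet> h)) (at y'))"
  then obtain \<nu> where y': "Phi (Suc n) y' = 1" and "\<nu> > 0"
    and d: "(Phi (Suc n) has_derivative (\<lambda>h. (\<nu> *\<^sub>R cross3 (d_s f p) (d_v f p)) \<bullet> h)) (at y')"
    by blast
  have grad': "gradPhi (Suc n) y' = \<nu> *\<^sub>R cross3 (d_s f p) (d_v f p)"
    using gradPhi_eqI[OF d] .
  have "gradPhi (Suc n) y' = (\<nu> / \<mu>) *\<^sub>R gradPhi (Suc n) y"
    unfolding grad' assms(3) using \<open>\<mu> > 0\<close> by simp
  moreover have "\<nu> / \<mu> > 0"
    using \<open>\<nu> > 0\<close> \<open>\<mu> > 0\<close> by simp
  ultimately show "y' = y"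
    using gradPhi_parallel_imp_eq[OF y' assms(1)] by blast
qed

lemma rot_surface_has_derivative:
  assumes "(u has_real_derivative U) (at a)"
  shows "(rot_surface u has_derivative (\<lambda>h. vector [fst h * cos v - snd h * (a * sin v),
           fst h * sin v + snd h * (a * cos v), U * fst h])) (at (a, v))"
  unfolding rot_surface_def[abs_def]
  by (intro has_derivative_vector3 has_real_derivative_fst_comp[OF assms])
    (auto intro!: derivative_eq_intros simp: algebra_simps)

lemma rot_surface_partials:
  assumes "(u has_real_derivative U) (at a)"
  shows "d_s (rot_surface u) (a, v) = vector [cos v, sin v, U]"
    and "d_v (rot_surface u) (a, v) = vector [- a * sin v, a * cos v, 0]"
    and "rot_surface u differentiable (at (a, v))"
  using frechet_derivative_at[OF rot_surface_has_derivative[OF assms, of v], symmetric]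
    rot_surface_has_derivative[OF assms, of v]
  by (auto simp: d_s_def d_v_def differentiable_def)

lemma rot_surface_normal:
  assumes "(u has_real_derivative U) (at a)"
  shows "cross3 (d_s (rot_surface u) (a, v)) (d_v (rot_surface u) (a, v))
    = a *\<^sub>R vector [- U * cos v, - U * sin v, 1]"
  unfolding rot_surface_partials[OF assms]
  by (simp add: cross3_def vec3_eq_iff algebra_simps flip: distrib_left)

lemma profile_point_exists:
  fixes U :: real
  assumes "U \<noteq> 0"
  obtains r z where "r > 0" "z > 0" "r^(2*n+2) + z^(2*n+2) = 1" "r^(2*n+1) = \<bar>U\<bar> * z^(2*n+1)"
proof
  define A where "A = root (2*n+1) \<bar>U\<bar>"
  define z where "z = 1 / root (2*n+2) (1 + A^(2*n+2))"
  have A: "A > 0" "A^(2*n+1) = \<bar>U\<bar>"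
    using assms real_root_pow_pos2[of "2*n+1" "\<bar>U\<bar>"]
    by (simp_all add: A_def del: real_root_pow_pos2)
  have pos: "1 + A^(2*n+2) > 0"
    using A(1) by (intro add_pos_pos zero_less_power) simp_all
  moreover have "root (2*n+2) (1 + A^(2*n+2)) ^ (2*n+2) = 1 + A^(2*n+2)"
    using pos by (intro real_root_pow_pos2) simp_all
  ultimately have z: "z > 0" "z^(2*n+2) * (1 + A^(2*n+2)) = 1"
    unfolding z_def power_divide by simp_all
  show "z * A > 0" "z > 0"
    using A z by simp_all
  show "(z * A)^(2*n+2) + z^(2*n+2) = 1"
    using z(2) by (simp add: power_mult_distrib algebra_simps)
  show "(z * A)^(2*n+1) = \<bar>U\<bar> * z^(2*n+1)"
    using A(2) by (simp add: power_mult_distrib)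
qed

lemma profile_slope_powr:
  fixes r z :: real
  assumes "r > 0" "z > 0" and sphere: "r^(2*n+2) + z^(2*n+2) = 1"
  shows "r^(2*n+1) / z^(2*n+1) = (r^2) powr ((2 * real (Suc n) - 1) / 2)
    / (1 - (r^2) ^ Suc n) powr ((2 * real (Suc n) - 1) / (2 * real (Suc n)))"
proof -
  have pow_powr: "(x^k) powr (real j / real k) = x^j" if "x > 0" "k > 0" for x :: real and j k
    using that by (simp add: powr_realpow[symmetric] powr_powr)
  have "1 - (r^2) ^ Suc n = z^(2*n+2)"
    using sphere power_mult[of r 2 "Suc n"] by simp
  moreover have "(2 * real (Suc n) - 1) / 2 = real (2*n+1) / real 2"
    "(2 * real (Suc n) - 1) / (2 * real (Suc n)) = real (2*n+1) / real (2*n+2)"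
    by simp_all
  ultimately show ?thesis
    using assms pow_powr[of r 2 "2*n+1"] pow_powr[of z "2*n+2" "2*n+1"] by simp
qed

lemma BG_map_rot_surface:
  assumes "a > 0" and u: "(u has_real_derivative U) (at a)" and "r > 0" "z > 0"
    and sphere: "r^(2*n+2) + z^(2*n+2) = 1" and slope: "r^(2*n+1) = \<bar>U\<bar> * z^(2*n+1)"
  shows "BG_map (Suc n) (rot_surface u) (a, v)
    = vector [- sgn U * r * cos v, - sgn U * r * sin v, z]" (is "_ = ?y")
proof (rule BG_map_eqI)
  have "U \<noteq> 0"
    using slope \<open>r > 0\<close> by auto
  then have R: "(?y$1)^2 + (?y$2)^2 = r^2"
    by (simp add: power_mult_distrib sgn_if flip: distrib_left)
  then show "Phi (Suc n) ?y = 1"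
    using sphere power_mult[of r 2 "Suc n"] by (simp add: Phi_def)
  show "2 * real (Suc n) * z^(2*n+1) / a > 0"
    using \<open>a > 0\<close> \<open>z > 0\<close> by simp
  have sgn_slope: "sgn U * r^(2*n+1) = U * z^(2*n+1)"
    unfolding slope by (simp add: mult.assoc[symmetric] sgn_mult_abs)
  have "gradPhi (Suc n) ?y = (2 * real (Suc n)) *\<^sub>R
      vector [- (sgn U * r^(2*n+1)) * cos v, - (sgn U * r^(2*n+1)) * sin v, z^(2*n+1)]"
    unfolding gradPhi_def R by (simp add: vec3_eq_iff power_mult[symmetric] algebra_simps)
  also have "\<dots> = (2 * real (Suc n) * z^(2*n+1) / a) *\<^sub>R (a *\<^sub>R vector [- U * cos v, - U * sin v, 1])"
    unfolding sgn_slope using \<open>a > 0\<close> by (simp add: vec3_eq_iff)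
  finally show "gradPhi (Suc n) ?y = (2 * real (Suc n) * z^(2*n+1) / a) *\<^sub>R
      cross3 (d_s (rot_surface u) (a, v)) (d_v (rot_surface u) (a, v))"
    unfolding rot_surface_normal[OF u] .
qed

lemma BG_map_rot_surfaceE:
  assumes "a > 0" and u: "(u has_real_derivative U) (at a)" and "U \<noteq> 0"
  obtains r z where "r > 0" "z > 0" "r^(2*n+2) + z^(2*n+2) = 1" "r^(2*n+1) = \<bar>U\<bar> * z^(2*n+1)"
    and "\<And>t. BG_map (Suc n) (rot_surface u) (a, t)
      = vector [- sgn U * r * cos t, - sgn U * r * sin t, z]"
proof -
  obtain r z where "r > 0" "z > 0" "r^(2*n+2) + z^(2*n+2) = 1" "r^(2*n+1) = \<bar>U\<bar> * z^(2*n+1)"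
    using profile_point_exists[OF \<open>U \<noteq> 0\<close>] by blast
  with BG_map_rot_surface[OF \<open>a > 0\<close> u] that show ?thesis
    by blast
qed

lemma BG_map_rot_surface_radial_sq_has_derivative:
  assumes curv: "mink_gauss_curv_at m (rot_surface u) (a, 0) k"
    and u: "(u has_real_derivative U) (at a)"
    and circle: "\<And>t. BG_map m (rot_surface u) (a, t) $ 1 = c * cos t"
      "\<And>t. BG_map m (rot_surface u) (a, t) $ 2 = c * sin t"
  shows "((\<lambda>x. (BG_map m (rot_surface u) (x, 0) $ 1)^2) has_real_derivative 2 * k * a) (at a)"
proof -
  define B where "B = BG_map m (rot_surface u)"
  obtain \<alpha> \<beta> \<gamma> \<delta> where "B differentiable (at (a, 0))"
    and ds: "d_s B (a, 0) = \<alpha> *\<^sub>R vector [1, 0, U] + \<gamma> *\<^sub>R vector [0, a, 0]"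
    and dv: "d_v B (a, 0) = \<beta> *\<^sub>R vector [1, 0, U] + \<delta> *\<^sub>R vector [0, a, 0]"
    and k: "k = \<alpha> * \<delta> - \<beta> * \<gamma>"
    using curv rot_surface_partials[OF u, of 0] unfolding mink_gauss_curv_at_def B_def by auto
  then have BD: "(B has_derivative frechet_derivative B (at (a, 0))) (at (a, 0))"
    using frechet_derivative_works by blast
  note partials = has_derivative_imp_partial_derivatives[OF BD]
  have radial: "((\<lambda>x. B (x, 0) $ 1) has_real_derivative \<alpha>) (at a)"
    using partials(1)[of 1] ds by (simp add: d_s_def)
  have "((\<lambda>t. B (a, t) $ 1) has_real_derivative \<beta>) (at 0)"
    using partials(2)[of 1] dv by (simp add: d_v_def)
  moreover have "((\<lambda>t. B (a, t) $ 1) has_real_derivative 0) (at 0)"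
    unfolding B_def circle by (auto intro!: derivative_eq_intros)
  ultimately have "\<beta> = 0"
    by (rule DERIV_unique)
  have "((\<lambda>t. B (a, t) $ 2) has_real_derivative \<delta> * a) (at 0)"
    using partials(2)[of 2] dv by (simp add: d_v_def)
  moreover have "((\<lambda>t. B (a, t) $ 2) has_real_derivative c) (at 0)"
    unfolding B_def circle by (auto intro!: derivative_eq_intros)
  ultimately have "\<delta> * a = c"
    by (rule DERIV_unique)
  have "\<alpha> * B (a, 0) $ 1 = k * a"
    using \<open>\<beta> = 0\<close> \<open>\<delta> * a = c\<close> k circle(1)[of 0] by (simp add: B_def algebra_simps)
  then have "((\<lambda>x. (B (x, 0) $ 1)^2) has_real_derivative 2 * k * a) (at a)"
    using radial by (auto intro!: derivative_eq_intros)
  then show ?thesis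
    by (simp add: B_def)
qed

lemma mink_gauss_curv_at_rot_surface:
  assumes "a \<noteq> 0" and u: "(u has_real_derivative U) (at a)"
    and rho: "(\<rho> has_real_derivative \<rho>') (at a)"
    and Z: "(Z has_real_derivative - \<sigma> * \<rho>' * U) (at a)"
    and "open S" "(a, v) \<in> S"
    and BG: "\<And>q. q \<in> S \<Longrightarrow> BG_map m (rot_surface u) q
      = vector [- \<sigma> * \<rho> (fst q) * cos (snd q), - \<sigma> * \<rho> (fst q) * sin (snd q), Z (fst q)]"
  shows "mink_gauss_curv_at m (rot_surface u) (a, v) (\<sigma>^2 * \<rho> a * \<rho>' / a)"
proof -
  define DE where "DE h = (vector [- \<sigma> * (\<rho>' * fst h * cos v - \<rho> a * sin v * snd h),
    - \<sigma> * (\<rho>' * fst h * sin v + \<rho> a * cos v * snd h), - \<sigma> * \<rho>' * U * fst h] :: real^3)" for h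
  have "((\<lambda>q. vector [- \<sigma> * \<rho> (fst q) * cos (snd q), - \<sigma> * \<rho> (fst q) * sin (snd q), Z (fst q)] :: real^3)
      has_derivative DE) (at (a, v))"
    unfolding DE_def[abs_def]
    by (intro has_derivative_vector3 has_real_derivative_fst_comp[OF Z])
      (auto intro!: derivative_eq_intros has_real_derivative_fst_comp[OF rho] simp: algebra_simps)
  then have BD: "(BG_map m (rot_surface u) has_derivative DE) (at (a, v))"
    by (rule has_derivative_transform_within_open[OF _ assms(5,6)]) (simp add: BG)
  have "frechet_derivative (BG_map m (rot_surface u)) (at (a, v)) = DE"
    using frechet_derivative_at[OF BD] by simp
  then have "d_s (BG_map m (rot_surface u)) (a, v) = (- \<sigma> * \<rho>') *\<^sub>R d_s (rot_surface u) (a, v) + 0 *\<^sub>R d_v (rot_surface u) (a, v)"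
    and "d_v (BG_map m (rot_surface u)) (a, v) = 0 *\<^sub>R d_s (rot_surface u) (a, v) + (- \<sigma> * \<rho> a / a) *\<^sub>R d_v (rot_surface u) (a, v)"
    unfolding d_s_def[of "BG_map m (rot_surface u)"] d_v_def[of "BG_map m (rot_surface u)"]
      rot_surface_partials[OF u] DE_def
    using \<open>a \<noteq> 0\<close> by (simp_all add: vec3_eq_iff)
  moreover have "\<sigma>^2 * \<rho> a * \<rho>' / a = (- \<sigma> * \<rho>') * (- \<sigma> * \<rho> a / a) - 0 * 0"
    by (simp add: power2_eq_square)
  ultimately show ?thesis
    unfolding mink_gauss_curv_at_def using rot_surface_partials(3)[OF u] BD
    by (blast intro: differentiableI)
qed

lemma const_mink_gauss_curv_rot_surface_radial_sq:
  assumes J: "is_interval J" "J \<subseteq> {0<..}"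
    and ud: "\<And>a. a \<in> J \<Longrightarrow> (u has_real_derivative deriv u a) (at a)"
    and nz: "\<forall>a\<in>J. deriv u a \<noteq> 0"
    and curv: "const_mink_gauss_curv (Suc n) (rot_surface u) (J \<times> UNIV) K"
  obtains c1 where "\<And>x. x \<in> J \<Longrightarrow> (BG_map (Suc n) (rot_surface u) (x, 0) $ 1)^2 = K * x^2 + c1"
proof -
  define B where "B = BG_map (Suc n) (rot_surface u)"
  have "((\<lambda>x. (B (x, 0) $ 1)^2 - K * x^2) has_real_derivative 0) (at a within J)" if "a \<in> J" for a
  proof -
    have "a > 0"
      using J(2) \<open>a \<in> J\<close> by auto
    then obtain r z
      where "\<And>t. B (a, t) = vector [- sgn (deriv u a) * r * cos t, - sgn (deriv u a) * r * sin t, z]"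
      using BG_map_rot_surfaceE[OF _ ud[OF \<open>a \<in> J\<close>], of n] nz \<open>a \<in> J\<close> unfolding B_def by blast
    moreover have "mink_gauss_curv_at (Suc n) (rot_surface u) (a, 0) K"
      using curv \<open>a \<in> J\<close> unfolding const_mink_gauss_curv_def by blast
    ultimately have "((\<lambda>x. (B (x, 0) $ 1)^2) has_real_derivative 2 * K * a) (at a)"
      unfolding B_def
      by (intro BG_map_rot_surface_radial_sq_has_derivative[OF _ ud[OF \<open>a \<in> J\<close>], of _ _ "- sgn (deriv u a) * r"])
        (simp_all add: mult.assoc)
    moreover have "((\<lambda>x. K * x^2) has_real_derivative K * (2 * a)) (at a)"
      by (auto intro!: derivative_eq_intros)
    ultimately have "((\<lambda>x. (B (x, 0) $ 1)^2 - K * x^2) has_real_derivative 0) (at a)"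
      using DERIV_diff by fastforce
    then show ?thesis
      by (rule has_field_derivative_at_within)
  qed
  then obtain c1 where "\<forall>x\<in>J. (B (x, 0) $ 1)^2 - K * x^2 = c1"
    using has_field_derivative_zero_constant[OF is_interval_convex[OF J(1)]] by blast
  then show ?thesis
    by (intro that[of c1]) (simp add: B_def algebra_simps)
qed

lemma const_mink_gauss_curv_rot_surface_imp_profile:
  assumes J: "is_interval J" "J \<noteq> {}" "J \<subseteq> {0<..}"
    and ud: "\<And>a. a \<in> J \<Longrightarrow> (u has_real_derivative deriv u a) (at a)"
    and "continuous_on J (deriv u)" and nz: "\<forall>a\<in>J. deriv u a \<noteq> 0"
    and curv: "const_mink_gauss_curv (Suc n) (rot_surface u) (J \<times> UNIV) K"
  shows "\<exists>c1. \<exists>\<sigma>\<in>{-1, 1::real}. \<forall>\<alpha>\<in>J.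
        0 < K * \<alpha>^2 + c1 \<and> K * \<alpha>^2 + c1 < 1 \<and>
        deriv u \<alpha> = \<sigma> * (K * \<alpha>^2 + c1) powr ((2 * real (Suc n) - 1) / 2)
          / (1 - (K * \<alpha>^2 + c1) ^ Suc n) powr ((2 * real (Suc n) - 1) / (2 * real (Suc n)))"
proof -
  obtain c1 where c1: "\<And>x. x \<in> J \<Longrightarrow> (BG_map (Suc n) (rot_surface u) (x, 0) $ 1)^2 = K * x^2 + c1"
    using const_mink_gauss_curv_rot_surface_radial_sq[OF J(1,3) ud nz curv] by blast
  obtain a0 where "a0 \<in> J"
    using J(2) by blast
  define \<sigma> where "\<sigma> = sgn (deriv u a0)"
  have "\<sigma> \<in> {-1, 1}"
    using nz \<open>a0 \<in> J\<close> by (auto simp: \<sigma>_def sgn_if)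
  moreover have "0 < K * \<alpha>^2 + c1 \<and> K * \<alpha>^2 + c1 < 1 \<and>
        deriv u \<alpha> = \<sigma> * (K * \<alpha>^2 + c1) powr ((2 * real (Suc n) - 1) / 2)
          / (1 - (K * \<alpha>^2 + c1) ^ Suc n) powr ((2 * real (Suc n) - 1) / (2 * real (Suc n)))"
    if "\<alpha> \<in> J" for \<alpha>
  proof -
    obtain r z where rz: "r > 0" "z > 0" "r^(2*n+2) + z^(2*n+2) = 1"
      and slope: "r^(2*n+1) = \<bar>deriv u \<alpha>\<bar> * z^(2*n+1)"
      and circle: "\<And>t. BG_map (Suc n) (rot_surface u) (\<alpha>, t)
        = vector [- sgn (deriv u \<alpha>) * r * cos t, - sgn (deriv u \<alpha>) * r * sin t, z]"
      using BG_map_rot_surfaceE[of \<alpha> u "deriv u \<alpha>" n] J(3) ud nz \<open>\<alpha> \<in> J\<close> by blast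
    have "(BG_map (Suc n) (rot_surface u) (\<alpha>, 0) $ 1)^2 = r^2"
      unfolding circle using nz \<open>\<alpha> \<in> J\<close> by (simp add: power_mult_distrib sgn_if)
    then have r2: "K * \<alpha>^2 + c1 = r^2"
      using c1[OF \<open>\<alpha> \<in> J\<close>] by simp
    have "(r^2)^Suc n = 1 - z^(2*n+2)"
      using rz(3) power_mult[of r 2 "Suc n"] by simp
    then have "(r^2)^Suc n < 1"
      using rz(2) by simp
    then have "r^2 < 1"
      using power_less_imp_less_base[of "r^2" "Suc n" 1] by simp
    moreover have "sgn (deriv u \<alpha>) = \<sigma>"
      unfolding \<sigma>_def using sgn_constant_on_interval[OF J(1) assms(5) nz \<open>\<alpha> \<in> J\<close> \<open>a0 \<in> J\<close>] .
    then have "deriv u \<alpha> = \<sigma> * (r^(2*n+1) / z^(2*n+1))"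
      using slope rz(2) by (metis sgn_mult_abs nonzero_mult_div_cancel_right power_not_zero less_irrefl)
    ultimately show ?thesis
      unfolding r2 profile_slope_powr[OF rz] using rz(1) by simp
  qed
  ultimately show ?thesis
    by blast
qed

lemma profile_curve_has_derivative:
  fixes n :: nat
  assumes P: "(P has_real_derivative P') (at a)" and "0 < P a" "P a < 1"
  defines "\<rho> \<equiv> \<lambda>x. sqrt (P x)" and "Z \<equiv> \<lambda>x. root (2*n+2) (1 - P x ^ Suc n)"
  shows "(\<rho> has_real_derivative P' / (2 * \<rho> a)) (at a)"
    and "(Z has_real_derivative - (P' / (2 * \<rho> a)) * \<rho> a ^ (2*n+1) / Z a ^ (2*n+1)) (at a)"
proof -
  have "\<rho> a > 0"
    using \<open>0 < P a\<close> by (simp add: \<rho>_def)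
  show "(\<rho> has_real_derivative P' / (2 * \<rho> a)) (at a)"
    unfolding \<rho>_def using DERIV_chain2[OF DERIV_real_sqrt[OF \<open>0 < P a\<close>] P]
    by (simp add: field_simps)
  have "1 - P a ^ Suc n > 0"
    using \<open>0 < P a\<close> \<open>P a < 1\<close> power_strict_mono[of "P a" 1 "Suc n"] by simp
  then have "Z a > 0"
    by (simp add: Z_def)
  have dQ: "((\<lambda>x. 1 - P x ^ Suc n) has_real_derivative - (real (Suc n) * P a ^ n * P')) (at a)"
    using DERIV_diff[OF DERIV_const DERIV_power_Suc[OF P]] by (simp add: algebra_simps)
  from DERIV_chain2[OF DERIV_real_root[of "2*n+2", OF _ \<open>1 - P a ^ Suc n > 0\<close>] dQ]
  have "(Z has_real_derivative inverse (real (2*n+2) * Z a ^ (2*n+1)) * - (real (Suc n) * P a ^ n * P'))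
      (at a)"
    unfolding Z_def by simp
  moreover have "\<rho> a ^ (2*n+1) = \<rho> a * P a ^ n"
    using power_mult[of "\<rho> a" 2 n] \<open>0 < P a\<close> by (simp add: \<rho>_def)
  then have "inverse (real (2*n+2) * Z a ^ (2*n+1)) * - (real (Suc n) * P a ^ n * P')
      = - (P' / (2 * \<rho> a)) * \<rho> a ^ (2*n+1) / Z a ^ (2*n+1)"
    using \<open>\<rho> a > 0\<close> \<open>Z a > 0\<close> by (simp add: field_simps del: of_nat_Suc) simp
  ultimately show "(Z has_real_derivative - (P' / (2 * \<rho> a)) * \<rho> a ^ (2*n+1) / Z a ^ (2*n+1)) (at a)"
    by simp
qed

lemma profile_imp_const_mink_gauss_curv_rot_surface:
  assumes J: "open J" "J \<subseteq> {0<..}"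
    and ud: "\<And>a. a \<in> J \<Longrightarrow> (u has_real_derivative deriv u a) (at a)"
    and \<sigma>: "\<sigma> \<in> {-1, 1::real}"
    and profile: "\<forall>\<alpha>\<in>J. 0 < K * \<alpha>^2 + c1 \<and> K * \<alpha>^2 + c1 < 1 \<and>
        deriv u \<alpha> = \<sigma> * (K * \<alpha>^2 + c1) powr ((2 * real (Suc n) - 1) / 2)
          / (1 - (K * \<alpha>^2 + c1) ^ Suc n) powr ((2 * real (Suc n) - 1) / (2 * real (Suc n)))"
  shows "const_mink_gauss_curv (Suc n) (rot_surface u) (J \<times> UNIV) K"
proof -
  define P where "P x = K * x^2 + c1" for x
  define \<rho> where "\<rho> x = sqrt (P x)" for x
  define Z where "Z x = root (2*n+2) (1 - P x ^ Suc n)" for x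
  have \<sigma>_sq: "\<sigma>^2 = 1"
    using \<sigma> by auto
  have P: "0 < P a" "P a < 1" if "a \<in> J" for a
    using profile that by (simp_all add: P_def)
  have rho_pos: "\<rho> a > 0" and Z_pos: "Z a > 0" and sphere: "\<rho> a^(2*n+2) + Z a^(2*n+2) = 1"
    and slope: "deriv u a = \<sigma> * (\<rho> a^(2*n+1) / Z a^(2*n+1))" if "a \<in> J" for a
  proof -
    have Q: "1 - P a ^ Suc n > 0"
      using P[OF that] power_strict_mono[of "P a" 1 "Suc n"] by simp
    show "\<rho> a > 0" "Z a > 0"
      using P[OF that] Q by (simp_all add: \<rho>_def Z_def)
    have "\<rho> a^2 = P a"
      using P[OF that] by (simp add: \<rho>_def)
    moreover have "Z a^(2*n+2) = 1 - P a ^ Suc n"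
      unfolding Z_def using Q by (intro real_root_pow_pos2) simp_all
    ultimately show sphere: "\<rho> a^(2*n+2) + Z a^(2*n+2) = 1"
      using power_mult[of "\<rho> a" 2 "Suc n"] by simp
    show "deriv u a = \<sigma> * (\<rho> a^(2*n+1) / Z a^(2*n+1))"
      using profile that \<open>\<rho> a^2 = P a\<close>
      unfolding profile_slope_powr[OF \<open>\<rho> a > 0\<close> \<open>Z a > 0\<close> sphere] P_def
      by simp
  qed
  have BG: "BG_map (Suc n) (rot_surface u) q
      = vector [- \<sigma> * \<rho> (fst q) * cos (snd q), - \<sigma> * \<rho> (fst q) * sin (snd q), Z (fst q)]"
    if "q \<in> J \<times> UNIV" for q
  proof -
    obtain a v where q: "q = (a, v)" and "a \<in> J"
      using \<open>q \<in> J \<times> UNIV\<close> by (cases q) auto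
    have "sgn (deriv u a) = \<sigma>" "\<rho> a^(2*n+1) = \<bar>deriv u a\<bar> * Z a^(2*n+1)"
      using slope[OF \<open>a \<in> J\<close>] rho_pos[OF \<open>a \<in> J\<close>] Z_pos[OF \<open>a \<in> J\<close>] \<sigma>
      by (auto simp: sgn_mult abs_mult)
    moreover have "a > 0"
      using J(2) \<open>a \<in> J\<close> by auto
    ultimately show ?thesis
      unfolding q using BG_map_rot_surface[OF _ ud rho_pos Z_pos sphere, OF _ \<open>a \<in> J\<close> \<open>a \<in> J\<close>
        \<open>a \<in> J\<close> \<open>a \<in> J\<close>] by simp
  qed
  show ?thesis
    unfolding const_mink_gauss_curv_def
  proof
    fix q :: "real \<times> real"
    assume "q \<in> J \<times> UNIV"
    then obtain a v where q: "q = (a, v)" and "a \<in> J"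
      by auto
    have "a > 0"
      using J(2) \<open>a \<in> J\<close> by auto
    have "(P has_real_derivative 2 * K * a) (at a)"
      unfolding P_def[abs_def] by (auto intro!: derivative_eq_intros)
    note derivs = profile_curve_has_derivative(1)[OF this P[OF \<open>a \<in> J\<close>], folded \<rho>_def]
      profile_curve_has_derivative(2)[where n = n, OF this P[OF \<open>a \<in> J\<close>], folded \<rho>_def Z_def]
    define \<rho>' where "\<rho>' = 2 * K * a / (2 * \<rho> a)"
    have "- \<rho>' * \<rho> a ^ (2*n+1) / Z a ^ (2*n+1) = - \<sigma> * \<rho>' * deriv u a"
      unfolding slope[OF \<open>a \<in> J\<close>] using \<sigma>_sq by (simp add: power2_eq_square)
    then have "mink_gauss_curv_at (Suc n) (rot_surface u) (a, v) (\<sigma>^2 * \<rho> a * \<rho>' / a)"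
      using \<open>a > 0\<close> \<open>a \<in> J\<close> derivs unfolding \<rho>'_def[symmetric]
      by (intro mink_gauss_curv_at_rot_surface[OF _ ud _ _ open_Times[OF J(1) open_UNIV] _ BG]) auto
    then show "mink_gauss_curv_at (Suc n) (rot_surface u) q K"
      unfolding q \<sigma>_sq \<rho>'_def using rho_pos[OF \<open>a \<in> J\<close>] \<open>a > 0\<close> by simp
  qed
qed

theorem theorem5p1:
  fixes m :: nat and K :: real and J :: "real set" and u :: "real \<Rightarrow> real"
  assumes "m \<ge> 2"
    and "K \<noteq> 0"
    and "open J" and "is_interval J" and "J \<noteq> {}" and "J \<subseteq> {0<..}"
    and "smooth_real_on J u"
    and "\<forall>\<alpha>\<in>J. deriv u \<alpha> \<noteq> 0"
  shows "const_mink_gauss_curv m (rot_surface u) (J \<times> UNIV) K \<longleftrightarrow>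
    (\<exists>c1::real. \<exists>\<sigma>\<in>{-1, 1::real}. \<forall>\<alpha>\<in>J.
        0 < K * \<alpha>^2 + c1 \<and> K * \<alpha>^2 + c1 < 1 \<and>
        deriv u \<alpha> = \<sigma> * (K * \<alpha>^2 + c1) powr ((2 * real m - 1) / 2)
                     / (1 - (K * \<alpha>^2 + c1) ^ m) powr ((2 * real m - 1) / (2 * real m)))"
proof -
  obtain n where m: "m = Suc n"
    using \<open>m \<ge> 2\<close> by (cases m) auto
  note ud = smooth_real_on_has_real_derivative[OF \<open>smooth_real_on J u\<close>]
  show ?thesis
    unfolding m
    using const_mink_gauss_curv_rot_surface_imp_profile[OF assms(4-6) ud
        smooth_real_on_continuous_deriv[OF assms(7)] assms(8)]
      profile_imp_const_mink_gauss_curv_rot_surface[OF assms(3,6) ud]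
    by blast
qed

end
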